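(* Let $G=\langle a,b,c\mid a^2=b^2=c^2=(ab)^3=(bc)^3=(ca)^3=1\rangle$ act on the Euclidean plane $\mathbf E^2$ as the reflection group of the tiling by equilateral triangles, and give $\mathbf E^2$ the structure of a space with walls whose walls are the lines of this tiling (each line determining the two open-or-closed half-planes it bounds, chosen as a complementary pair). Then the associated CAT(0) cube complex $X$ is isomorphic to $\mathbf R^3$ with its standard cubulation (vertex set $\mathbf Z^3$); the induced action of $G$ on $X$ is proper, preserves a plane perpendicular to $(1,1,1)$ on which it acts cocompactly, but is not cocompact on $X$.
   Context: A space with walls is a set $Y$ with a non-empty collection $\mathcal H\subset\mathcal P(Y)$ of non-empty subsets closed under complement, such that for any $p,q\in Y$ only finitely many $h\in\mathcal H$ contain $p$ but not $q$. Walls: $\{h,h^c\}$; $W$ the set of walls; walls cross if all four intersections of their half-spaces are non-empty. The associated cube complex $X$: vertices are the admissible sections $\sigma:W\to\mathcal H$ ($\sigma(\overline h)\in\overline h$ and $\sigma(\overline h)\not\subseteq\sigma(\overline k)^c$ for all walls $\overline h,\overline k$) lying in the connected component, of the graph joining sections differing on exactly one wall, which contains $\sigma_p$ ($\sigma_p(\overline h)$ = the half-space of $\overline h$ containing $p$); a unit $k$-cube is attached along the 1-skeleton-of-a-$k$-cube spanned by each vertex together with $k$ incident edges whose labelling walls pairwise cross. $G$ acts on sections by $(g\sigma)(\overline h)=g(\sigma(g^{-1}\overline h))$. *)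

theory Defs
  imports "HOL-Analysis.Analysis"
begin

text \<open>A space with walls on the whole type 'a: H is the set of half-spaces
 (closed under complement in UNIV).\<close>

definition walls :: "'a set set \<Rightarrow> 'a set set set" where
  "walls H = {{h, - h} | h. h \<in> H}"

definition is_section :: "'a set set \<Rightarrow> ('a set set \<Rightarrow> 'a set) \<Rightarrow> bool" where
  "is_section H \<sigma> \<longleftrightarrow> (\<forall>w\<in>walls H. \<sigma> w \<in> w) \<and> (\<forall>w. w \<notin> walls H \<longrightarrow> \<sigma> w = {})"

definition admissible :: "'a set set \<Rightarrow> ('a set set \<Rightarrow> 'a set) \<Rightarrow> bool" where
  "admissible H \<sigma> \<longleftrightarrow> is_section H \<sigma> \<and>
     (\<forall>w\<in>walls H. \<forall>k\<in>walls H. \<not> (\<sigma> w \<subseteq> - \<sigma> k))"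

definition sigma_pt :: "'a set set \<Rightarrow> 'a \<Rightarrow> ('a set set \<Rightarrow> 'a set)" where
  "sigma_pt H p = (\<lambda>w. if w \<in> walls H then (THE h. h \<in> w \<and> p \<in> h) else {})"

definition sec_edges :: "'a set set \<Rightarrow> (('a set set \<Rightarrow> 'a set) \<times> ('a set set \<Rightarrow> 'a set)) set" where
  "sec_edges H = {(\<sigma>, \<tau>). admissible H \<sigma> \<and> admissible H \<tau> \<and> (\<exists>!w. \<sigma> w \<noteq> \<tau> w)}"

definition cc_vertices :: "'a set set \<Rightarrow> 'a \<Rightarrow> ('a set set \<Rightarrow> 'a set) set" where
  "cc_vertices H p = {\<tau>. admissible H \<tau> \<and> (sigma_pt H p, \<tau>) \<in> (sec_edges H)\<^sup>*}"

definition crosses :: "'a set set \<Rightarrow> 'a set set \<Rightarrow> bool" where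
  "crosses w k \<longleftrightarrow> (\<forall>h\<in>w. \<forall>h'\<in>k. h \<inter> h' \<noteq> {})"

definition flip :: "('a set set \<Rightarrow> 'a set) \<Rightarrow> 'a set set set \<Rightarrow> ('a set set \<Rightarrow> 'a set)" where
  "flip \<sigma> T = (\<lambda>w. if w \<in> T then - \<sigma> w else \<sigma> w)"

text \<open>Cubes of X, given by their vertex sets: a vertex with finitely many incident edges
 labelled by pairwise crossing walls, spanning the 1-skeleton of a cube.\<close>
definition cc_cubes :: "'a set set \<Rightarrow> 'a \<Rightarrow> ('a set set \<Rightarrow> 'a set) set set" where
  "cc_cubes H p = {{flip \<sigma> T | T. T \<subseteq> W0} | \<sigma> W0.
      \<sigma> \<in> cc_vertices H p \<and> W0 \<subseteq> walls H \<and> finite W0 \<and>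
      (\<forall>w\<in>W0. \<forall>k\<in>W0. w \<noteq> k \<longrightarrow> crosses w k) \<and>
      (\<forall>T. T \<subseteq> W0 \<longrightarrow> flip \<sigma> T \<in> cc_vertices H p)}"

text \<open>Action of a map g on half-spaces: the half-space whose interior is the image of the
 interior (needed since no complementary choice of open/closed half-planes is G-invariant).\<close>
definition hs_img :: "'a::topological_space set set \<Rightarrow> ('a \<Rightarrow> 'a) \<Rightarrow> 'a set \<Rightarrow> 'a set" where
  "hs_img H g h = (THE h'. h' \<in> H \<and> interior h' = g ` interior h)"

definition wall_img :: "'a::topological_space set set \<Rightarrow> ('a \<Rightarrow> 'a) \<Rightarrow> 'a set set \<Rightarrow> 'a set set" where
  "wall_img H g w = hs_img H g ` w"

definition sec_act :: "'a::topological_space set set \<Rightarrow> ('a \<Rightarrow> 'a) \<Rightarrow> ('a set set \<Rightarrow> 'a set) \<Rightarrow> ('a set set \<Rightarrow> 'a set)" where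
  "sec_act H g \<sigma> = (\<lambda>w. if w \<in> walls H then hs_img H g (\<sigma> (wall_img H (inv g) w)) else {})"

definition dot2 :: "real \<times> real \<Rightarrow> real \<times> real \<Rightarrow> real" where
  "dot2 p q = fst p * fst q + snd p * snd q"

definition nrm :: "nat \<Rightarrow> real \<times> real" where
  "nrm i = (if i = 0 then (0, 1) else if i = 1 then (sqrt 3 / 2, 1 / 2) else (sqrt 3 / 2, - 1 / 2))"

text \<open>Lines of the tiling by unit equilateral triangles: dot2 p (nrm i) = k * sqrt 3 / 2.
 Half-spaces: the closed side and the complementary open side.\<close>
definition tri_H :: "(real \<times> real) set set" where
  "tri_H = {{p. dot2 p (nrm i) \<ge> of_int k * (sqrt 3 / 2)} | i k. i < (3::nat)}
         \<union> {{p. dot2 p (nrm i) < of_int k * (sqrt 3 / 2)} | i k. i < (3::nat)}"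

definition refl_line :: "nat \<Rightarrow> int \<Rightarrow> real \<times> real \<Rightarrow> real \<times> real" where
  "refl_line i k p = (let t = dot2 p (nrm i) - of_int k * (sqrt 3 / 2)
                      in (fst p - 2 * t * fst (nrm i), snd p - 2 * t * snd (nrm i)))"

text \<open>Generators a, b, c: reflections in the sides of the triangle (0,0), (1,0), (1/2, sqrt 3/2).\<close>
definition tri_gens :: "(real \<times> real \<Rightarrow> real \<times> real) set" where
  "tri_gens = {refl_line 0 0, refl_line 2 0, refl_line 1 1}"

inductive_set tri_G :: "(real \<times> real \<Rightarrow> real \<times> real) set" where
  tri_G_id: "id \<in> tri_G"
| tri_G_step: "g \<in> tri_G \<Longrightarrow> r \<in> tri_gens \<Longrightarrow> r \<circ> g \<in> tri_G"

definition Z3 :: "(real^3) set" where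
  "Z3 = {x. \<forall>i. x $ i \<in> \<int>}"

definition std_cubes :: "(real^3) set set" where
  "std_cubes = {{v + (\<chi> i. if i \<in> T then 1 else 0) | T. T \<subseteq> S} | v S. v \<in> Z3}"

definition plane111 :: "real \<Rightarrow> (real^3) set" where
  "plane111 c = {x. x \<bullet> vector [1, 1, 1] = c}"

end

theory Submission
  imports Defs
begin

text \<open>The lines of the tiling are the level sets \<open>tri_coord j = k\<close> (\<open>j = 1, 2, 3\<close>, \<open>k \<in> \<int>\<close>) of
  three linear forms with \<open>tri_coord 1 + tri_coord 2 + tri_coord 3 = 0\<close>. Two lines cross iff
  they belong to different families, and admissibility forces a section to orient the lines of
  one family monotonically. So a vertex of \<open>X\<close> is given by one integer per family, adjacent
  vertices differ by one in one coordinate, and the cubes are the unit cubes of \<open>\<int>\<^sup>3\<close>.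

  An element of \<open>G\<close> permutes the three families and acts on each by \<open>x \<mapsto> s x + d\<close> with
  \<open>s = \<plusminus>1\<close> and integral shifts summing to \<open>0\<close>; on \<open>\<int>\<^sup>3\<close> this is a signed coordinate
  permutation plus a translation, which extends to an isometry of \<open>\<real>\<^sup>3\<close>. The element is
  determined by these data, and the shifts are bounded when a compact set meets its image:
  this gives properness. The affine function \<open>x \<bullet> (1, 1, 1) + 3/2\<close> is multiplied by \<open>s\<close>, so
  its zero set is invariant and the translations in \<open>G\<close> act cocompactly on it, while its
  unboundedness rules out cocompactness on \<open>\<real>\<^sup>3\<close>.\<close>

section \<open>Coordinates, half-planes and walls of the tiling\<close>

definition tri_coord :: "3 \<Rightarrow> real \<times> real \<Rightarrow> real" where
  "tri_coord j p =
     (if j = 1 then 2 * snd p / sqrt 3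
      else if j = 2 then - fst p - snd p / sqrt 3
      else fst p - snd p / sqrt 3)"

definition coord_point :: "real \<Rightarrow> real \<Rightarrow> real \<times> real" where
  "coord_point u v = (v + u / 2, u * sqrt 3 / 2)"

lemma tri_coord_coord_point [simp]:
  "tri_coord 1 (coord_point u v) = u"
  "tri_coord 2 (coord_point u v) = - u - v"
  "tri_coord 3 (coord_point u v) = v"
  by (auto simp: tri_coord_def coord_point_def field_simps)

lemma tri_coord_sum: "tri_coord 1 p + tri_coord 2 p + tri_coord 3 p = 0"
  by (simp add: tri_coord_def)

lemma tri_coord_eqI:
  assumes "i \<noteq> j" "tri_coord i p = tri_coord i q" "tri_coord j p = tri_coord j q"
  shows "p = q"
proof -
  have "tri_coord 1 p = tri_coord 1 q \<and> tri_coord 3 p = tri_coord 3 q"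
    using assms tri_coord_sum[of p] tri_coord_sum[of q] exhaust_3[of i] exhaust_3[of j] by auto
  then have "snd p = snd q" "fst p = fst q"
    by (auto simp: tri_coord_def)
  then show ?thesis by (simp add: prod_eq_iff)
qed

lemma exists_tri_coord_pair:
  assumes "i \<noteq> j" shows "\<exists>p. tri_coord i p = \<alpha> \<and> tri_coord j p = \<beta>"
proof -
  let ?u = "if i = 1 then \<alpha> else if j = 1 then \<beta> else - \<alpha> - \<beta>"
  let ?v = "if i = 3 then \<alpha> else if j = 3 then \<beta> else - \<alpha> - \<beta>"
  have "tri_coord i (coord_point ?u ?v) = \<alpha> \<and> tri_coord j (coord_point ?u ?v) = \<beta>"
    using assms exhaust_3[of i] exhaust_3[of j] by auto
  then show ?thesis by blast
qed

lemma exists_tri_coord: "\<exists>p. tri_coord i p = \<alpha>"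
proof -
  have "i \<noteq> (if i = 1 then 2 else 1)" by auto
  then show ?thesis using exists_tri_coord_pair by blast
qed

lemma tri_coord_eq_inner: "\<exists>n. n \<noteq> 0 \<and> (\<forall>p. tri_coord j p = n \<bullet> p)"
proof (intro exI conjI allI)
  let ?n = "if j = 1 then (0, 2 / sqrt 3) else if j = 2 then (-1, - 1 / sqrt 3) else (1 :: real, - 1 / sqrt 3)"
  show "?n \<noteq> 0" by (simp add: zero_prod_def)
  show "tri_coord j p = ?n \<bullet> p" for p by (cases p) (auto simp: tri_coord_def)
qed


text \<open>For \<open>j = 2\<close> the closed side is the lower one: the normal \<open>nrm 1\<close> used in \<open>tri_H\<close>
  points in the direction of decreasing \<open>tri_coord 2\<close>.\<close>

definition half_plane :: "3 \<Rightarrow> int \<Rightarrow> bool \<Rightarrow> (real \<times> real) set" where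
  "half_plane j k b =
     {p. b \<longleftrightarrow> (if j = 2 then of_int k < tri_coord j p else of_int k \<le> tri_coord j p)}"

definition open_half_plane :: "3 \<Rightarrow> int \<Rightarrow> bool \<Rightarrow> (real \<times> real) set" where
  "open_half_plane j k b = {p. if b then of_int k < tri_coord j p else tri_coord j p < of_int k}"

lemma half_plane_compl: "- half_plane j k b = half_plane j k (\<not> b)"
  by (auto simp: half_plane_def)

lemma interior_half_plane: "interior (half_plane j k b) = open_half_plane j k b"
proof -
  obtain n :: "real \<times> real" where "n \<noteq> 0" and n: "\<And>p. tri_coord j p = n \<bullet> p"
    using tri_coord_eq_inner by blast
  then have "interior {p. of_int k \<le> n \<bullet> p} = {p. of_int k < n \<bullet> p}"
    "interior {p. n \<bullet> p \<le> of_int k} = {p. n \<bullet> p < of_int k}"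
    "interior {p. of_int k < n \<bullet> p} = {p. of_int k < n \<bullet> p}"
    "interior {p. n \<bullet> p < of_int k} = {p. n \<bullet> p < of_int k}"
    by (simp_all add: interior_open open_halfspace_lt open_halfspace_gt)
  moreover have "half_plane j k b =
      (if b then (if j = 2 then {p. of_int k < n \<bullet> p} else {p. of_int k \<le> n \<bullet> p})
       else (if j = 2 then {p. n \<bullet> p \<le> of_int k} else {p. n \<bullet> p < of_int k}))"
    unfolding half_plane_def n by auto
  ultimately show ?thesis
    by (simp add: open_half_plane_def n)
qed

lemma open_half_plane_subset: "open_half_plane j k b \<subseteq> half_plane j k b"
  by (auto simp: open_half_plane_def half_plane_def)

lemma real_half_lines_meet:
  fixes k k' :: int
  assumes "\<not> (b' = (\<not> b) \<and> (if b then k' \<le> k else k \<le> k'))"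
  shows "\<exists>x::real. (if b then k < x else x < k) \<and> (b' \<longleftrightarrow> (if strict then k' < x else k' \<le> x))"
proof (cases "b' = b")
  case True
  show ?thesis
  proof (cases b)
    case True
    then show ?thesis using \<open>b' = b\<close> by (intro exI[of _ "of_int (max k k') + 1"]) auto
  next
    case False
    then show ?thesis using \<open>b' = b\<close> by (intro exI[of _ "of_int (min k k') - 1"]) auto
  qed
next
  case False
  then have "if b then k < k' else k' < k" using assms by auto
  then show ?thesis
    using False by (cases b) (auto intro!: exI[of _ "of_int (if b then k else k') + 1 / 2"])
qed

lemma open_half_plane_disjointD:
  assumes disj: "open_half_plane j k b \<inter> half_plane j' k' b' = {}"
  shows "j' = j \<and> b' = (\<not> b) \<and> (if b then k' \<le> k else k \<le> k')"
proof (rule ccontr)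
  assume nc: "\<not> ?thesis"
  have "\<exists>p. p \<in> open_half_plane j k b \<inter> half_plane j' k' b'"
  proof (cases "j' = j")
    case False
    then have "j \<noteq> j'" by simp
    then obtain p where "tri_coord j p = of_int k + (if b then 1 else -1)"
      "tri_coord j' p = of_int k' + (if b' then 1 else -1)"
      using exists_tri_coord_pair by blast
    then have "p \<in> open_half_plane j k b \<inter> half_plane j' k' b'"
      by (cases b; cases b') (auto simp: open_half_plane_def half_plane_def)
    then show ?thesis by blast
  next
    case True
    with nc have "\<not> (b' = (\<not> b) \<and> (if b then k' \<le> k else k \<le> k'))" by simp
    then obtain x :: real where x: "(if b then k < x else x < k) \<and> (b' \<longleftrightarrow> (if j = 2 then k' < x else k' \<le> x))"
      using real_half_lines_meet[where strict = "j = 2"] by blast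
    obtain p where "tri_coord j p = x" using exists_tri_coord by blast
    then have "p \<in> open_half_plane j k b \<inter> half_plane j' k' b'"
      using x True by (cases b) (auto simp: open_half_plane_def half_plane_def)
    then show ?thesis by blast
  qed
  then show False using disj by blast
qed

lemma half_plane_disjoint_iff:
  "half_plane j k b \<inter> half_plane j' k' b' = {} \<longleftrightarrow>
     j' = j \<and> b' = (\<not> b) \<and> (if b then k' \<le> k else k \<le> k')"
proof
  assume "half_plane j k b \<inter> half_plane j' k' b' = {}"
  then show "j' = j \<and> b' = (\<not> b) \<and> (if b then k' \<le> k else k \<le> k')"
    using open_half_plane_subset open_half_plane_disjointD by blast
next
  assume "j' = j \<and> b' = (\<not> b) \<and> (if b then k' \<le> k else k \<le> k')"
  then show "half_plane j k b \<inter> half_plane j' k' b' = {}"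
    by (cases b) (auto simp: half_plane_def)
qed

lemma interior_half_plane_eqD:
  assumes "interior (half_plane j k b) = interior (half_plane j' k' b')"
  shows "j = j' \<and> k = k' \<and> b = b'"
proof -
  have opens: "open_half_plane j k b = open_half_plane j' k' b'"
    using assms by (simp add: interior_half_plane)
  have "open_half_plane j' k' b' \<inter> half_plane j k (\<not> b) = {}"
    using opens open_half_plane_subset[of j k b] half_plane_compl[of j k b] by blast
  note one = open_half_plane_disjointD[OF this]
  have "open_half_plane j k b \<inter> half_plane j' k' (\<not> b') = {}"
    using opens open_half_plane_subset[of j' k' b'] half_plane_compl[of j' k' b'] by blast
  note two = open_half_plane_disjointD[OF this]
  show ?thesis using one two by (cases b) auto
qed

lemma half_plane_eq_iff: "half_plane j k b = half_plane j' k' b' \<longleftrightarrow> j = j' \<and> k = k' \<and> b = b'"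
proof
  assume "half_plane j k b = half_plane j' k' b'"
  then show "j = j' \<and> k = k' \<and> b = b'" by (intro interior_half_plane_eqD) simp
qed auto

lemma dot2_nrm:
  "dot2 p (nrm 0) = sqrt 3 / 2 * tri_coord 1 p"
  "dot2 p (nrm 1) = - (sqrt 3 / 2) * tri_coord 2 p"
  "dot2 p (nrm 2) = sqrt 3 / 2 * tri_coord 3 p"
  by (simp_all add: dot2_def nrm_def tri_coord_def field_simps)

lemma tri_H_half_planes:
  "{p. dot2 p (nrm 0) \<ge> of_int k * (sqrt 3 / 2)} = half_plane 1 k True"
  "{p. dot2 p (nrm 0) < of_int k * (sqrt 3 / 2)} = half_plane 1 k False"
  "{p. dot2 p (nrm 1) \<ge> of_int k * (sqrt 3 / 2)} = half_plane 2 (- k) False"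
  "{p. dot2 p (nrm 1) < of_int k * (sqrt 3 / 2)} = half_plane 2 (- k) True"
  "{p. dot2 p (nrm 2) \<ge> of_int k * (sqrt 3 / 2)} = half_plane 3 k True"
  "{p. dot2 p (nrm 2) < of_int k * (sqrt 3 / 2)} = half_plane 3 k False"
proof -
  have c: "0 < sqrt 3 / (2 :: real)" by simp
  have le: "a * (sqrt 3 / 2) \<le> sqrt 3 / 2 * x \<longleftrightarrow> a \<le> x" for a x :: real
    by (metis mult.commute mult_le_cancel_left_pos c)
  have lt: "sqrt 3 / 2 * x < a * (sqrt 3 / 2) \<longleftrightarrow> x < a" for a x :: real
    by (meson le not_le)
  have neg_le: "a * (sqrt 3 / 2) \<le> - (sqrt 3 / 2) * x \<longleftrightarrow> x \<le> - a" for a x :: real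
    using le[of a "- x"] by linarith
  have neg_lt: "- (sqrt 3 / 2) * x < a * (sqrt 3 / 2) \<longleftrightarrow> - a < x" for a x :: real
    by (meson neg_le not_le)
  show "{p. dot2 p (nrm 0) \<ge> of_int k * (sqrt 3 / 2)} = half_plane 1 k True"
       "{p. dot2 p (nrm 0) < of_int k * (sqrt 3 / 2)} = half_plane 1 k False"
       "{p. dot2 p (nrm 1) \<ge> of_int k * (sqrt 3 / 2)} = half_plane 2 (- k) False"
       "{p. dot2 p (nrm 1) < of_int k * (sqrt 3 / 2)} = half_plane 2 (- k) True"
       "{p. dot2 p (nrm 2) \<ge> of_int k * (sqrt 3 / 2)} = half_plane 3 k True"
       "{p. dot2 p (nrm 2) < of_int k * (sqrt 3 / 2)} = half_plane 3 k False"
    unfolding dot2_nrm le lt neg_le neg_lt by (auto simp: half_plane_def)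
qed

lemma tri_H_eq: "tri_H = {half_plane j k b | j k b. True}"
proof -
  have "{p. dot2 p (nrm i) \<ge> of_int k * (sqrt 3 / 2)} \<in> {half_plane j k b | j k b. True} \<and>
        {p. dot2 p (nrm i) < of_int k * (sqrt 3 / 2)} \<in> {half_plane j k b | j k b. True}"
    if "i < 3" for i k
  proof -
    from that have "i = 0 \<or> i = 1 \<or> i = 2" by auto
    then show ?thesis by (elim disjE; simp only: tri_H_half_planes) blast+
  qed
  moreover have "half_plane j k b \<in> tri_H" for j k b
  proof -
    have A: "{p. dot2 p (nrm i) \<ge> of_int k * (sqrt 3 / 2)} \<in> tri_H"
      and B: "{p. dot2 p (nrm i) < of_int k * (sqrt 3 / 2)} \<in> tri_H" if "i < 3" for i k
      unfolding tri_H_def using that by blast+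
    have "j = 1 \<or> j = 2 \<or> j = 3" by (rule exhaust_3)
    then show ?thesis
      using A[of 0 k] B[of 0 k] A[of 1 "- k"] B[of 1 "- k"] A[of 2 k] B[of 2 k]
      unfolding tri_H_half_planes by (cases b) auto
  qed
  ultimately show ?thesis
    unfolding tri_H_def by blast
qed

definition tri_wall :: "3 \<Rightarrow> int \<Rightarrow> (real \<times> real) set set" where
  "tri_wall j k = {half_plane j k True, half_plane j k False}"

lemma walls_tri_H: "walls tri_H = {tri_wall j k | j k. True}"
proof (intro set_eqI iffI)
  fix w assume "w \<in> walls tri_H"
  then obtain j k b where "w = {half_plane j k b, - half_plane j k b}"
    unfolding walls_def tri_H_eq by blast
  then have "w = tri_wall j k" by (cases b) (auto simp: tri_wall_def half_plane_compl)
  then show "w \<in> {tri_wall j k | j k. True}" by blast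
next
  fix w assume "w \<in> {tri_wall j k | j k. True}"
  then obtain j k where "w = tri_wall j k" by blast
  then have "w = {half_plane j k True, - half_plane j k True}"
    by (simp add: tri_wall_def half_plane_compl)
  then show "w \<in> walls tri_H" unfolding walls_def tri_H_eq by blast
qed

lemma tri_wall_in_walls [simp]: "tri_wall j k \<in> walls tri_H"
  by (auto simp: walls_tri_H)

lemma half_plane_in_tri_wall_iff: "half_plane j k b \<in> tri_wall j' k' \<longleftrightarrow> j = j' \<and> k = k'"
  by (auto simp: tri_wall_def half_plane_eq_iff)

lemma tri_wall_eq_iff: "tri_wall j k = tri_wall j' k' \<longleftrightarrow> j = j' \<and> k = k'"
  by (metis half_plane_in_tri_wall_iff insertI1 tri_wall_def)

lemma crosses_tri_wall_iff: "crosses (tri_wall j k) (tri_wall j' k') \<longleftrightarrow> j \<noteq> j'"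
  by (auto simp: crosses_def tri_wall_def half_plane_disjoint_iff)


section \<open>Vertices\<close>

type_synonym tri_section = "(real \<times> real) set set \<Rightarrow> (real \<times> real) set"

lemma sec_edges_sym: "(\<sigma>, \<tau>) \<in> sec_edges H \<Longrightarrow> (\<tau>, \<sigma>) \<in> sec_edges H"
  unfolding sec_edges_def by (auto simp: eq_commute)

lemma flip_singleton_differs: "\<exists>!w'. \<sigma> w' \<noteq> flip \<sigma> {w} w'"
proof (rule ex1I[of _ w])
  show "\<sigma> w \<noteq> flip \<sigma> {w} w" by (simp add: flip_def) (metis Compl_iff)
  show "w' = w" if "\<sigma> w' \<noteq> flip \<sigma> {w} w'" for w'
    using that unfolding flip_def by (cases "w' = w") auto
qed

definition sec_of :: "(3 \<Rightarrow> int) \<Rightarrow> tri_section" where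
  "sec_of z w =
     (if w \<in> walls tri_H then (THE h. \<exists>j k. w = tri_wall j k \<and> h = half_plane j k (k \<le> z j)) else {})"

lemma sec_of_tri_wall [simp]: "sec_of z (tri_wall j k) = half_plane j k (k \<le> z j)"
proof -
  have "(THE h. \<exists>j' k'. tri_wall j k = tri_wall j' k' \<and> h = half_plane j' k' (k' \<le> z j'))
        = half_plane j k (k \<le> z j)"
    by (rule the_equality) (auto simp: tri_wall_eq_iff)
  then show ?thesis by (simp add: sec_of_def)
qed

lemma sec_of_outside: "w \<notin> walls tri_H \<Longrightarrow> sec_of z w = {}"
  by (simp add: sec_of_def)

lemma tri_section_eqI:
  assumes "\<And>w. w \<notin> walls tri_H \<Longrightarrow> \<sigma> w = {}" "\<And>w. w \<notin> walls tri_H \<Longrightarrow> \<tau> w = {}"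
    and "\<And>j k. \<sigma> (tri_wall j k) = \<tau> (tri_wall j k)"
  shows "\<sigma> = \<tau>"
proof
  fix w show "\<sigma> w = \<tau> w"
    using assms by (cases "w \<in> walls tri_H") (auto simp: walls_tri_H)
qed

lemma admissible_sec_of: "admissible tri_H (sec_of z)"
proof -
  have "sec_of z w \<in> w" if "w \<in> walls tri_H" for w
    using that by (auto simp: walls_tri_H half_plane_in_tri_wall_iff)
  moreover have "sec_of z w \<inter> sec_of z w' \<noteq> {}"
    if ww': "w \<in> walls tri_H" "w' \<in> walls tri_H" for w w'
  proof -
    obtain j k j' k' where "w = tri_wall j k" "w' = tri_wall j' k'"
      using ww' unfolding walls_tri_H by blast
    then show ?thesis by (auto simp: half_plane_disjoint_iff)
  qed
  ultimately show ?thesis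
    by (auto simp: admissible_def is_section_def sec_of_outside disjoint_eq_subset_Compl)
qed

lemma inj_sec_of: "inj sec_of"
proof (rule injI)
  fix z z' assume eq: "sec_of z = sec_of z'"
  show "z = z'"
  proof
    fix j
    have "sec_of z (tri_wall j (z j)) = sec_of z' (tri_wall j (z j))"
         "sec_of z (tri_wall j (z' j)) = sec_of z' (tri_wall j (z' j))"
      using eq by simp_all
    then show "z j = z' j" by (auto simp: half_plane_eq_iff)
  qed
qed

definition point_coords :: "real \<times> real \<Rightarrow> 3 \<Rightarrow> int" where
  "point_coords p j = (if j = 2 then \<lceil>tri_coord j p\<rceil> - 1 else \<lfloor>tri_coord j p\<rfloor>)"

lemma sigma_pt_tri_H: "sigma_pt tri_H p = sec_of (point_coords p)"
proof (rule tri_section_eqI)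
  fix j k
  have "(THE h. h \<in> tri_wall j k \<and> p \<in> h) = half_plane j k (p \<in> half_plane j k True)"
    by (rule the_equality) (auto simp: tri_wall_def half_plane_def)
  moreover have "p \<in> half_plane j k True \<longleftrightarrow> k \<le> point_coords p j"
    by (simp add: half_plane_def point_coords_def le_floor_iff less_ceiling_iff)
  ultimately show "sigma_pt tri_H p (tri_wall j k) = sec_of (point_coords p) (tri_wall j k)"
    by (simp add: sigma_pt_def)
qed (simp_all add: sigma_pt_def sec_of_outside)

definition flip_coords :: "(3 \<Rightarrow> int) \<Rightarrow> (3 \<Rightarrow> int) \<Rightarrow> 3 set \<Rightarrow> 3 \<Rightarrow> int" where
  "flip_coords z \<kappa> T j = (if j \<in> T then (if \<kappa> j = z j then z j - 1 else z j + 1) else z j)"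

lemma flip_sec_of:
  assumes "\<forall>j\<in>T. \<kappa> j = z j \<or> \<kappa> j = z j + 1"
  shows "flip (sec_of z) ((\<lambda>j. tri_wall j (\<kappa> j)) ` T) = sec_of (flip_coords z \<kappa> T)"
proof (rule tri_section_eqI)
  fix w assume "w \<notin> walls tri_H"
  then show "flip (sec_of z) ((\<lambda>j. tri_wall j (\<kappa> j)) ` T) w = {}"
    by (auto simp: flip_def sec_of_outside)
next
  fix i k
  have "tri_wall i k \<in> (\<lambda>j. tri_wall j (\<kappa> j)) ` T \<longleftrightarrow> i \<in> T \<and> k = \<kappa> i"
    by (auto simp: tri_wall_eq_iff)
  moreover have "(k \<le> flip_coords z \<kappa> T i) = (if i \<in> T \<and> k = \<kappa> i then \<not> k \<le> z i else k \<le> z i)"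
    using assms by (auto simp: flip_coords_def)
  ultimately show "flip (sec_of z) ((\<lambda>j. tri_wall j (\<kappa> j)) ` T) (tri_wall i k) =
      sec_of (flip_coords z \<kappa> T) (tri_wall i k)"
    by (simp add: flip_def half_plane_compl)
qed (rule sec_of_outside)

lemma admissible_flip_sec_ofD:
  assumes adm: "admissible tri_H (flip (sec_of z) {tri_wall j k})"
  shows "k = z j \<or> k = z j + 1"
proof (rule ccontr)
  assume k: "\<not> ?thesis"
  let ?\<tau> = "flip (sec_of z) {tri_wall j k}"
  have \<tau>: "?\<tau> (tri_wall j k') = half_plane j k' (if k' = k then \<not> k' \<le> z j else k' \<le> z j)" for k'
    by (simp add: flip_def tri_wall_eq_iff half_plane_compl)
  \<comment> \<open>the wall adjacent to \<open>z\<close> on the side of \<open>k\<close>\<close>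
  define k' where "k' = (if k \<le> z j then z j else z j + 1)"
  have "?\<tau> (tri_wall j k) \<inter> ?\<tau> (tri_wall j k') = {}"
    using k unfolding \<tau> k'_def by (auto simp: half_plane_disjoint_iff)
  moreover have "?\<tau> (tri_wall j k) \<inter> ?\<tau> (tri_wall j k') \<noteq> {}"
    using adm by (auto simp: admissible_def disjoint_eq_subset_Compl)
  ultimately show False by blast
qed

lemma sec_edge_flip:
  assumes "(\<sigma>, \<tau>) \<in> sec_edges H"
  obtains w where "w \<in> walls H" "\<tau> = flip \<sigma> {w}"
proof -
  from assms have \<sigma>: "admissible H \<sigma>" and \<tau>: "admissible H \<tau>" and "\<exists>!w. \<sigma> w \<noteq> \<tau> w"
    by (auto simp: sec_edges_def)
  then obtain w where w: "\<sigma> w \<noteq> \<tau> w" and others: "\<And>w'. \<sigma> w' \<noteq> \<tau> w' \<Longrightarrow> w' = w"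
    by blast
  have "w \<in> walls H"
  proof (rule ccontr)
    assume "w \<notin> walls H"
    then have "\<sigma> w = {}" "\<tau> w = {}"
      using \<sigma> \<tau> by (simp_all add: admissible_def is_section_def)
    with w show False by simp
  qed
  moreover obtain h where "w = {h, - h}" using \<open>w \<in> walls H\<close> by (auto simp: walls_def)
  moreover have "\<sigma> w \<in> w" "\<tau> w \<in> w"
    using \<sigma> \<tau> \<open>w \<in> walls H\<close> by (simp_all add: admissible_def is_section_def)
  ultimately have \<tau>w: "\<tau> w = - \<sigma> w" using w by auto
  have "\<tau> = flip \<sigma> {w}"
  proof
    fix w' show "\<tau> w' = flip \<sigma> {w} w'"
      using others[of w'] \<tau>w by (cases "w' = w") (auto simp: flip_def)
  qed
  with \<open>w \<in> walls H\<close> show thesis by (rule that)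
qed

lemma sec_edge_from_sec_of:
  assumes "(sec_of z, \<tau>) \<in> sec_edges tri_H"
  shows "\<tau> \<in> range sec_of"
proof -
  obtain w where "w \<in> walls tri_H" "\<tau> = flip (sec_of z) {w}"
    using assms by (rule sec_edge_flip)
  then obtain j k where \<tau>: "\<tau> = flip (sec_of z) {tri_wall j k}"
    unfolding walls_tri_H by blast
  moreover have "admissible tri_H \<tau>" using assms by (simp add: sec_edges_def)
  ultimately have "k = z j \<or> k = z j + 1" by (simp add: admissible_flip_sec_ofD)
  then have "flip (sec_of z) ((\<lambda>i. tri_wall i k) ` {j}) = sec_of (flip_coords z (\<lambda>_. k) {j})"
    by (intro flip_sec_of) simp
  then show ?thesis using \<tau> by simp
qed

lemma sec_edge_incr: "(sec_of z, sec_of (z(j := z j + 1))) \<in> sec_edges tri_H"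
proof -
  have "flip (sec_of z) ((\<lambda>i. tri_wall i (z j + 1)) ` {j}) = sec_of (flip_coords z (\<lambda>_. z j + 1) {j})"
    by (intro flip_sec_of) simp
  moreover have "flip_coords z (\<lambda>_. z j + 1) {j} = z(j := z j + 1)"
    by (auto simp: flip_coords_def)
  ultimately have "flip (sec_of z) {tri_wall j (z j + 1)} = sec_of (z(j := z j + 1))"
    by simp
  moreover have "\<exists>!w. sec_of z w \<noteq> flip (sec_of z) {tri_wall j (z j + 1)} w"
    by (rule flip_singleton_differs)
  ultimately show ?thesis
    using admissible_sec_of unfolding sec_edges_def by simp
qed

lemma sec_of_reach_coord: "(sec_of z, sec_of (z(j := m))) \<in> (sec_edges tri_H)\<^sup>*"
proof (cases "z j \<le> m")
  case True
  then show ?thesis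
  proof (induction m rule: int_ge_induct)
    case (step i)
    have "(sec_of (z(j := i)), sec_of (z(j := i + 1))) \<in> sec_edges tri_H"
      using sec_edge_incr[of "z(j := i)" j] by simp
    with step.IH show ?case by (rule rtrancl_into_rtrancl)
  qed simp
next
  case False
  then have "m \<le> z j" by simp
  then show ?thesis
  proof (induction m rule: int_le_induct)
    case (step i)
    have "(sec_of (z(j := i - 1)), sec_of (z(j := i))) \<in> sec_edges tri_H"
      using sec_edge_incr[of "z(j := i - 1)" j] by simp
    with step.IH show ?case by (blast intro: rtrancl_into_rtrancl sec_edges_sym)
  qed simp
qed

lemma sec_of_connected: "(sec_of z, sec_of z') \<in> (sec_edges tri_H)\<^sup>*"
proof -
  let ?z1 = "z(1 := z' 1)"
  let ?z2 = "?z1(2 := z' 2)"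
  have "z' = ?z2(3 := z' 3)"
  proof
    fix i :: 3 show "z' i = (?z2(3 := z' 3)) i" using exhaust_3[of i] by auto
  qed
  moreover have "(sec_of z, sec_of ?z1) \<in> (sec_edges tri_H)\<^sup>*"
    "(sec_of ?z1, sec_of ?z2) \<in> (sec_edges tri_H)\<^sup>*"
    "(sec_of ?z2, sec_of (?z2(3 := z' 3))) \<in> (sec_edges tri_H)\<^sup>*"
    by (rule sec_of_reach_coord)+
  ultimately show ?thesis by (metis rtrancl_trans)
qed

lemma cc_vertices_tri_H: "cc_vertices tri_H p = range sec_of"
proof
  show "cc_vertices tri_H p \<subseteq> range sec_of"
  proof
    fix \<tau> assume "\<tau> \<in> cc_vertices tri_H p"
    then have "(sec_of (point_coords p), \<tau>) \<in> (sec_edges tri_H)\<^sup>*"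
      by (simp add: cc_vertices_def sigma_pt_tri_H)
    then show "\<tau> \<in> range sec_of"
      by (induction rule: rtrancl_induct) (auto intro: sec_edge_from_sec_of)
  qed
  show "range sec_of \<subseteq> cc_vertices tri_H p"
    unfolding cc_vertices_def sigma_pt_tri_H using admissible_sec_of sec_of_connected by blast
qed

section \<open>Cubes\<close>

definition int_box :: "('n \<Rightarrow> int) \<Rightarrow> 'n set \<Rightarrow> ('n \<Rightarrow> int) set" where
  "int_box v J = {z. \<forall>i. z i = v i \<or> (i \<in> J \<and> z i = v i + 1)}"

lemma pairwise_crossing_tri_walls:
  assumes "W \<subseteq> walls tri_H" and "\<forall>w\<in>W. \<forall>w'\<in>W. w \<noteq> w' \<longrightarrow> crosses w w'"
  obtains J \<kappa> where "W = (\<lambda>j. tri_wall j (\<kappa> j)) ` J"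
proof -
  define \<kappa> where "\<kappa> j = (THE k. tri_wall j k \<in> W)" for j
  have unique: "k = k'" if kk': "tri_wall j k \<in> W" "tri_wall j k' \<in> W" for j k k'
  proof (rule ccontr)
    assume "k \<noteq> k'"
    then have "tri_wall j k \<noteq> tri_wall j k'" by (simp add: tri_wall_eq_iff)
    with assms(2) kk' have "crosses (tri_wall j k) (tri_wall j k')" by blast
    then show False by (simp add: crosses_tri_wall_iff)
  qed
  have \<kappa>: "\<kappa> j = k" if "tri_wall j k \<in> W" for j k
    unfolding \<kappa>_def using that unique by blast
  have "W = (\<lambda>j. tri_wall j (\<kappa> j)) ` {j. \<exists>k. tri_wall j k \<in> W}"
  proof (intro equalityI subsetI)
    fix w assume "w \<in> W"
    moreover obtain j k where "w = tri_wall j k"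
      using \<open>w \<in> W\<close> assms(1) unfolding walls_tri_H by blast
    ultimately show "w \<in> (\<lambda>j. tri_wall j (\<kappa> j)) ` {j. \<exists>k. tri_wall j k \<in> W}"
      using \<kappa> by blast
  qed (use \<kappa> in auto)
  then show thesis by (rule that)
qed

lemma flip_coords_Pow:
  assumes "\<forall>j\<in>J. \<kappa> j = z j \<or> \<kappa> j = z j + 1"
  shows "flip_coords z \<kappa> ` Pow J = int_box (\<lambda>j. if j \<in> J \<and> \<kappa> j = z j then z j - 1 else z j) J"
    (is "_ = int_box ?v J")
proof (intro equalityI subsetI)
  fix y assume "y \<in> flip_coords z \<kappa> ` Pow J"
  then obtain T where T: "T \<subseteq> J" "y = flip_coords z \<kappa> T" by blast
  have "y i = ?v i \<or> (i \<in> J \<and> y i = ?v i + 1)" for i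
    using T assms by (cases "i \<in> J"; cases "i \<in> T") (auto simp: flip_coords_def)
  then show "y \<in> int_box ?v J" by (simp add: int_box_def)
next
  fix y assume y: "y \<in> int_box ?v J"
  have "y = flip_coords z \<kappa> {j \<in> J. y j \<noteq> z j}"
  proof
    fix i
    show "y i = flip_coords z \<kappa> {j \<in> J. y j \<noteq> z j} i"
      using y[unfolded int_box_def, simplified, rule_format, of i] assms
      by (cases "i \<in> J") (auto simp: flip_coords_def)
  qed
  then show "y \<in> flip_coords z \<kappa> ` Pow J" by blast
qed

lemma flip_cube_sec_of:
  assumes "\<forall>j\<in>J. \<kappa> j = z j \<or> \<kappa> j = z j + 1"
  shows "{flip (sec_of z) T | T. T \<subseteq> (\<lambda>j. tri_wall j (\<kappa> j)) ` J} =
         sec_of ` int_box (\<lambda>j. if j \<in> J \<and> \<kappa> j = z j then z j - 1 else z j) J"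
proof -
  have "{flip (sec_of z) T | T. T \<subseteq> (\<lambda>j. tri_wall j (\<kappa> j)) ` J}
      = (\<lambda>T. flip (sec_of z) ((\<lambda>j. tri_wall j (\<kappa> j)) ` T)) ` Pow J"
    by (auto simp: subset_image_iff)
  also have "\<dots> = (\<lambda>T. sec_of (flip_coords z \<kappa> T)) ` Pow J"
    using assms by (intro image_cong refl flip_sec_of) auto
  also have "\<dots> = sec_of ` (flip_coords z \<kappa> ` Pow J)"
    by (simp add: image_image)
  finally show ?thesis
    by (simp add: flip_coords_Pow[OF assms])
qed

lemma sec_of_int_box_in_cc_cubes: "sec_of ` int_box v J \<in> cc_cubes tri_H p"
proof -
  let ?W = "(\<lambda>j. tri_wall j (v j + 1)) ` J"
  have cube: "{flip (sec_of v) T | T. T \<subseteq> ?W} = sec_of ` int_box v J"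
    using flip_cube_sec_of[of J "\<lambda>j. v j + 1" v] by simp
  have "sec_of v \<in> cc_vertices tri_H p" "?W \<subseteq> walls tri_H" "finite ?W"
    by (auto simp: cc_vertices_tri_H)
  moreover have "\<forall>w\<in>?W. \<forall>w'\<in>?W. w \<noteq> w' \<longrightarrow> crosses w w'"
    by (auto simp: crosses_tri_wall_iff)
  moreover have "\<forall>T. T \<subseteq> ?W \<longrightarrow> flip (sec_of v) T \<in> cc_vertices tri_H p"
  proof (intro allI impI)
    fix T assume "T \<subseteq> ?W"
    then have "flip (sec_of v) T \<in> {flip (sec_of v) T | T. T \<subseteq> ?W}" by blast
    then show "flip (sec_of v) T \<in> cc_vertices tri_H p"
      unfolding cube cc_vertices_tri_H by blast
  qed
  ultimately show ?thesis
    unfolding cc_cubes_def cube[symmetric] by blast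
qed

lemma cc_cubes_tri_H: "cc_cubes tri_H p = {sec_of ` int_box v J | v J. True}"
proof (intro equalityI subsetI)
  fix S assume "S \<in> cc_cubes tri_H p"
  then obtain \<sigma> W where S: "S = {flip \<sigma> T | T. T \<subseteq> W}" and "\<sigma> \<in> cc_vertices tri_H p"
    and W: "W \<subseteq> walls tri_H" "finite W" "\<forall>w\<in>W. \<forall>w'\<in>W. w \<noteq> w' \<longrightarrow> crosses w w'"
    and flips: "\<forall>T. T \<subseteq> W \<longrightarrow> flip \<sigma> T \<in> cc_vertices tri_H p"
    unfolding cc_cubes_def by blast
  then obtain z where z: "\<sigma> = sec_of z" by (auto simp: cc_vertices_tri_H)
  from W(1,3) obtain J \<kappa> where WJ: "W = (\<lambda>j. tri_wall j (\<kappa> j)) ` J"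
    by (rule pairwise_crossing_tri_walls)
  have "\<kappa> j = z j \<or> \<kappa> j = z j + 1" if "j \<in> J" for j
  proof -
    have "{tri_wall j (\<kappa> j)} \<subseteq> W" using WJ that by blast
    with flips have "flip (sec_of z) {tri_wall j (\<kappa> j)} \<in> range sec_of"
      unfolding z cc_vertices_tri_H by blast
    then obtain z' where "flip (sec_of z) {tri_wall j (\<kappa> j)} = sec_of z'" by blast
    then have "admissible tri_H (flip (sec_of z) {tri_wall j (\<kappa> j)})"
      using admissible_sec_of by simp
    then show ?thesis by (rule admissible_flip_sec_ofD)
  qed
  then have "S = sec_of ` int_box (\<lambda>j. if j \<in> J \<and> \<kappa> j = z j then z j - 1 else z j) J"
    unfolding S z WJ by (intro flip_cube_sec_of) blast
  then show "S \<in> {sec_of ` int_box v J | v J. True}" by blast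
qed (auto intro: sec_of_int_box_in_cc_cubes)

definition of_int_vec :: "('n::finite \<Rightarrow> int) \<Rightarrow> real^'n" where
  "of_int_vec z = (\<chi> j. of_int (z j))"

lemma of_int_vec_nth [simp]: "of_int_vec z $ j = of_int (z j)"
  by (simp add: of_int_vec_def)

lemma inj_of_int_vec: "inj of_int_vec"
  by (rule injI) (simp add: vec_eq_iff fun_eq_iff)

lemma Z3_eq_range: "Z3 = range of_int_vec"
proof (intro equalityI subsetI)
  fix x assume "x \<in> Z3"
  then have "x = of_int_vec (\<lambda>j. \<lfloor>x $ j\<rfloor>)"
    by (auto simp: Z3_def vec_eq_iff elim!: Ints_cases)
  then show "x \<in> range of_int_vec" by blast
qed (auto simp: Z3_def)

lemma std_cube_eq:
  "{of_int_vec v + (\<chi> i. if i \<in> T then 1 else 0) | T. T \<subseteq> J} = of_int_vec ` int_box v J"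
proof (intro equalityI subsetI)
  fix x assume "x \<in> {of_int_vec v + (\<chi> i. if i \<in> T then 1 else 0) | T. T \<subseteq> J}"
  then obtain T where "T \<subseteq> J" "x = of_int_vec v + (\<chi> i. if i \<in> T then 1 else 0)" by blast
  then have "x = of_int_vec (\<lambda>i. v i + (if i \<in> T then 1 else 0))"
    and "(\<lambda>i. v i + (if i \<in> T then 1 else 0)) \<in> int_box v J"
    by (auto simp: vec_eq_iff int_box_def)
  then show "x \<in> of_int_vec ` int_box v J" by blast
next
  fix x assume "x \<in> of_int_vec ` int_box v J"
  then obtain z where z: "z \<in> int_box v J" "x = of_int_vec z" by blast
  then have "{i. z i = v i + 1} \<subseteq> J"
    unfolding int_box_def by force
  moreover have "x = of_int_vec v + (\<chi> i. if i \<in> {i. z i = v i + 1} then 1 else 0)"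
    using z unfolding int_box_def vec_eq_iff by force
  ultimately show "x \<in> {of_int_vec v + (\<chi> i. if i \<in> T then 1 else 0) | T. T \<subseteq> J}" by blast
qed

lemma std_cubes_eq: "std_cubes = {of_int_vec ` int_box v J | v J. True}"
  unfolding std_cubes_def Z3_eq_range std_cube_eq[symmetric] by blast

definition vertex_coords :: "tri_section \<Rightarrow> real^3" where
  "vertex_coords \<sigma> = of_int_vec (inv sec_of \<sigma>)"

lemma vertex_coords_sec_of [simp]: "vertex_coords (sec_of z) = of_int_vec z"
  by (simp add: vertex_coords_def inv_f_f[OF inj_sec_of])

lemma bij_betw_vertex_coords: "bij_betw vertex_coords (cc_vertices tri_H p) Z3"
  unfolding bij_betw_def cc_vertices_tri_H Z3_eq_range
proof
  show "inj_on vertex_coords (range sec_of)"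
    by (rule inj_onI) (auto simp: inj_eq[OF inj_of_int_vec])
  show "vertex_coords ` range sec_of = range of_int_vec"
    by (simp add: image_image)
qed

lemma cc_cubes_iff_std_cubes:
  assumes "S \<subseteq> cc_vertices tri_H p"
  shows "S \<in> cc_cubes tri_H p \<longleftrightarrow> vertex_coords ` S \<in> std_cubes"
proof -
  define Z where "Z = sec_of -` S"
  have S: "S = sec_of ` Z" using assms unfolding Z_def cc_vertices_tri_H by auto
  have "S \<in> cc_cubes tri_H p \<longleftrightarrow> (\<exists>v J. Z = int_box v J)"
    unfolding cc_cubes_tri_H S by (auto simp: inj_image_eq_iff[OF inj_sec_of])
  also have "\<dots> \<longleftrightarrow> vertex_coords ` S \<in> std_cubes"
    unfolding std_cubes_eq S image_image by (auto simp: inj_image_eq_iff[OF inj_of_int_vec])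
  finally show ?thesis .
qed


section \<open>The action of the group\<close>

definition coord_affine ::
    "(real \<times> real \<Rightarrow> real \<times> real) \<Rightarrow> (3 \<Rightarrow> 3) \<Rightarrow> int \<Rightarrow> (3 \<Rightarrow> int) \<Rightarrow> bool" where
  "coord_affine g \<rho> s d \<longleftrightarrow> bij \<rho> \<and> (s = 1 \<or> s = -1) \<and>
     (\<forall>i p. tri_coord (\<rho> i) (g p) = of_int s * tri_coord i p + of_int (d i))"

lemma coord_affineD:
  "coord_affine g \<rho> s d \<Longrightarrow> tri_coord (\<rho> i) (g p) = of_int s * tri_coord i p + of_int (d i)"
  unfolding coord_affine_def by blast

lemma coord_affine_id: "coord_affine id id 1 (\<lambda>_. 0)"
  by (simp add: coord_affine_def)

lemma coord_affine_comp:
  assumes "coord_affine g \<rho> s d" "coord_affine r \<rho>' s' d'"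
  shows "coord_affine (r \<circ> g) (\<rho>' \<circ> \<rho>) (s' * s) (\<lambda>i. s' * d i + d' (\<rho> i))"
proof -
  have "tri_coord (\<rho>' (\<rho> i)) (r (g p)) = of_int (s' * s) * tri_coord i p + of_int (s' * d i + d' (\<rho> i))"
    for i p
    by (simp add: coord_affineD[OF assms(1)] coord_affineD[OF assms(2)] algebra_simps)
  then show ?thesis
    using assms by (auto simp: coord_affine_def bij_comp)
qed

lemma coord_affine_refl_a: "coord_affine (refl_line 0 0) (Transposition.transpose 2 3) (-1) (\<lambda>_. 0)"
proof -
  have "tri_coord (Transposition.transpose 2 3 i) (refl_line 0 0 p) = - tri_coord i p" for i p
    using exhaust_3[of i]
    by (elim disjE) (simp_all add: refl_line_def dot2_def nrm_def tri_coord_def)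
  then show ?thesis by (simp add: coord_affine_def)
qed

lemma coord_affine_refl_b: "coord_affine (refl_line 2 0) (Transposition.transpose 1 2) (-1) (\<lambda>_. 0)"
proof -
  have "tri_coord (Transposition.transpose 1 2 i) (refl_line 2 0 p) = - tri_coord i p" for i p
    using exhaust_3[of i]
    by (elim disjE) (simp_all add: refl_line_def dot2_def nrm_def tri_coord_def field_simps)
  then show ?thesis by (simp add: coord_affine_def)
qed

lemma coord_affine_refl_c:
  "coord_affine (refl_line 1 1) (Transposition.transpose 1 3) (-1) (\<lambda>i. if i = 2 then -2 else 1)"
proof -
  have "tri_coord (Transposition.transpose 1 3 i) (refl_line 1 1 p) =
        - tri_coord i p + (if i = 2 then -2 else 1)" for i p
    using exhaust_3[of i]
    by (elim disjE) (simp_all add: refl_line_def dot2_def nrm_def tri_coord_def field_simps)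
  then show ?thesis by (simp add: coord_affine_def)
qed

lemma tri_G_coord_affine: "g \<in> tri_G \<Longrightarrow> \<exists>\<rho> s d. coord_affine g \<rho> s d"
proof (induction rule: tri_G.induct)
  case tri_G_id
  then show ?case using coord_affine_id by blast
next
  case (tri_G_step g r)
  then obtain \<rho> s d where "coord_affine g \<rho> s d" by blast
  moreover from tri_G_step.hyps(2) obtain \<rho>' s' d' where "coord_affine r \<rho>' s' d'"
    unfolding tri_gens_def using coord_affine_refl_a coord_affine_refl_b coord_affine_refl_c by blast
  ultimately show ?case by (blast dest: coord_affine_comp)
qed

lemma coord_affine_coord_inv:
  assumes "coord_affine g \<rho> s d"
  shows "tri_coord i p = of_int s * (tri_coord (\<rho> i) (g p) - of_int (d i))"
proof -
  have "of_int s * of_int s = (1 :: real)" using assms by (auto simp: coord_affine_def)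
  moreover have "tri_coord (\<rho> i) (g p) = of_int s * tri_coord i p + of_int (d i)"
    using assms unfolding coord_affine_def by blast
  then have "of_int s * (tri_coord (\<rho> i) (g p) - of_int (d i)) = (of_int s * of_int s) * tri_coord i p"
    by (simp add: algebra_simps)
  ultimately show ?thesis by simp
qed

lemma coord_affine_bij:
  assumes g: "coord_affine g \<rho> s d"
  shows "bij g"
proof (rule bijI)
  have \<rho>: "bij \<rho>" using g by (simp add: coord_affine_def)
  show "inj g"
  proof (rule injI)
    fix p q assume "g p = g q"
    then have "tri_coord i p = tri_coord i q" for i
      using coord_affine_coord_inv[OF g, of i p] coord_affine_coord_inv[OF g, of i q] by simp
    then show "p = q" using tri_coord_eqI[of 1 3] by simp
  qed
  show "surj g"
    unfolding surj_def
  proof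
    fix q
    have "(1::3) \<noteq> 3" by simp
    then obtain p where p: "tri_coord 1 p = of_int s * (tri_coord (\<rho> 1) q - of_int (d 1))"
      "tri_coord 3 p = of_int s * (tri_coord (\<rho> 3) q - of_int (d 3))"
      using exists_tri_coord_pair by blast
    have "of_int s \<noteq> (0::real)" using g by (auto simp: coord_affine_def)
    then have "tri_coord (\<rho> i) (g p) = tri_coord (\<rho> i) q" if "tri_coord i p = of_int s * (tri_coord (\<rho> i) q - of_int (d i))" for i
      using that coord_affine_coord_inv[OF g, of i p] by simp
    with p have "tri_coord (\<rho> 1) (g p) = tri_coord (\<rho> 1) q" "tri_coord (\<rho> 3) (g p) = tri_coord (\<rho> 3) q"
      by blast+
    moreover have "\<rho> 1 \<noteq> \<rho> 3" using \<rho> \<open>(1::3) \<noteq> 3\<close> unfolding bij_def inj_def by metis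
    ultimately have "q = g p" by (metis tri_coord_eqI)
    then show "\<exists>p. q = g p" by blast
  qed
qed

lemma coord_affine_inv:
  assumes g: "coord_affine g \<rho> s d"
  shows "coord_affine (inv g) (inv \<rho>) s (\<lambda>j. - s * d (inv \<rho> j))"
proof -
  have \<rho>: "bij \<rho>" and s: "s = 1 \<or> s = -1" using g by (auto simp: coord_affine_def)
  have "tri_coord (inv \<rho> j) (inv g q) = of_int s * tri_coord j q + of_int (- s * d (inv \<rho> j))" for j q
  proof -
    have "\<rho> (inv \<rho> j) = j" "g (inv g q) = q"
      using \<rho> coord_affine_bij[OF g] by (simp_all add: bij_def surj_f_inv_f)
    then show ?thesis
      using coord_affine_coord_inv[OF g, of "inv \<rho> j" "inv g q"] by (simp add: algebra_simps)
  qed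
  with \<rho> s show ?thesis by (simp add: coord_affine_def bij_imp_bij_inv)
qed

lemma coord_affine_unique:
  assumes g: "coord_affine g \<rho> s d" and g': "coord_affine g \<rho>' s' d'"
  shows "\<rho> = \<rho>' \<and> s = s' \<and> d = d'"
proof -
  have "s \<noteq> 0" using g by (auto simp: coord_affine_def)
  have \<rho>: "\<rho> i = \<rho>' i" for i
  proof (rule ccontr)
    assume "\<rho> i \<noteq> \<rho>' i"
    then obtain q where q: "tri_coord (\<rho> i) q = of_int (d i)" "tri_coord (\<rho>' i) q = of_int (d' i) + 1"
      using exists_tri_coord_pair by blast
    obtain p where p: "q = g p" using coord_affine_bij[OF g] by (metis bij_pointE)
    have "of_int s * tri_coord i p + of_int (d i) = of_int (d i)"
      using g q(1) p unfolding coord_affine_def by metis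
    then have "tri_coord i p = 0" using \<open>s \<noteq> 0\<close> by simp
    moreover have "tri_coord (\<rho>' i) q = of_int s' * tri_coord i p + of_int (d' i)"
      using g' p unfolding coord_affine_def by metis
    ultimately show False using q(2) by simp
  qed
  then have same: "of_int s * tri_coord i p + of_int (d i) = of_int s' * tri_coord i p + (of_int (d' i) :: real)"
    for i p
    using g g' by (metis coord_affine_def)
  have "d i = d' i" for i
  proof -
    obtain p where "tri_coord i p = 0" using exists_tri_coord by blast
    then show ?thesis using same[of i p] by simp
  qed
  moreover have "s = s'"
  proof -
    obtain p where "tri_coord 1 p = 1" using exists_tri_coord by blast
    then show ?thesis using same[of 1 p] calculation by simp
  qed
  ultimately show ?thesis using \<rho> by auto
qed

lemma coord_affine_determines:
  assumes g: "coord_affine g \<rho> s d" and g': "coord_affine g' \<rho> s d"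
  shows "g = g'"
proof
  fix p
  have "tri_coord i (g p) = tri_coord i (g' p)" for i
    using g g' bij_pointE[of \<rho> i] unfolding coord_affine_def by metis
  then show "g p = g' p" using tri_coord_eqI[of 1 3] by simp
qed

lemma coord_affine_shift_sum:
  assumes g: "coord_affine g \<rho> s d"
  shows "d 1 + d 2 + d 3 = 0"
proof -
  define p :: "real \<times> real" where "p = 0"
  have \<rho>: "bij \<rho>" using g by (simp add: coord_affine_def)
  have "of_int s * (tri_coord 1 p + tri_coord 2 p + tri_coord 3 p) + of_int (d 1 + d 2 + d 3)
      = (\<Sum>i\<in>UNIV. of_int s * tri_coord i p + (of_int (d i) :: real))"
    by (simp add: sum_3 algebra_simps)
  also have "\<dots> = (\<Sum>i\<in>UNIV. tri_coord (\<rho> i) (g p))"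
    by (simp add: coord_affineD[OF g])
  also have "\<dots> = (\<Sum>j\<in>UNIV. tri_coord j (g p))"
    using \<rho> by (intro sum.reindex_bij_betw) (simp add: bij_betw_def bij_def)
  also have "\<dots> = 0"
    using tri_coord_sum[of "g p"] by (simp add: sum_3)
  finally show ?thesis using tri_coord_sum[of p] by simp
qed

lemma image_open_half_plane:
  assumes g: "coord_affine g \<rho> s d"
  shows "g ` open_half_plane i k b = open_half_plane (\<rho> i) (s * k + d i) (if s = 1 then b else \<not> b)"
proof -
  have s: "s = 1 \<or> s = -1" using g by (simp add: coord_affine_def)
  have "g ` {p. P (tri_coord i p)} = {q. P (of_int s * (tri_coord (\<rho> i) q - of_int (d i)))}" for P
  proof (intro equalityI subsetI)
    fix q assume "q \<in> {q. P (of_int s * (tri_coord (\<rho> i) q - of_int (d i)))}"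
    moreover obtain p where "q = g p" using coord_affine_bij[OF g] by (metis bij_pointE)
    ultimately show "q \<in> g ` {p. P (tri_coord i p)}"
      using coord_affine_coord_inv[OF g, of i p] by auto
  qed (auto simp: coord_affine_coord_inv[OF g, symmetric])
  from this[of "\<lambda>x. if b then of_int k < x else x < of_int k"] s show ?thesis
    by (auto simp: open_half_plane_def algebra_simps)
qed

lemma hs_img_half_plane:
  assumes g: "coord_affine g \<rho> s d"
  shows "hs_img tri_H g (half_plane i k b) = half_plane (\<rho> i) (s * k + d i) (if s = 1 then b else \<not> b)"
  unfolding hs_img_def
proof (rule the_equality)
  show "half_plane (\<rho> i) (s * k + d i) (if s = 1 then b else \<not> b) \<in> tri_H \<and>
    interior (half_plane (\<rho> i) (s * k + d i) (if s = 1 then b else \<not> b)) = g ` interior (half_plane i k b)"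
    by (auto simp: tri_H_eq interior_half_plane image_open_half_plane[OF g])
next
  fix h assume h: "h \<in> tri_H \<and> interior h = g ` interior (half_plane i k b)"
  then obtain j k' b' where h': "h = half_plane j k' b'" unfolding tri_H_eq by blast
  with h have "interior (half_plane j k' b') =
      interior (half_plane (\<rho> i) (s * k + d i) (if s = 1 then b else \<not> b))"
    by (simp add: interior_half_plane image_open_half_plane[OF g])
  then have "j = \<rho> i \<and> k' = s * k + d i \<and> b' = (if s = 1 then b else \<not> b)"
    by (rule interior_half_plane_eqD)
  then show "h = half_plane (\<rho> i) (s * k + d i) (if s = 1 then b else \<not> b)"
    unfolding h' by (elim conjE) (simp only:)
qed

lemma wall_img_inv_tri_wall:
  assumes g: "coord_affine g \<rho> s d"
  shows "wall_img tri_H (inv g) (tri_wall j k) = tri_wall (inv \<rho> j) (s * k - s * d (inv \<rho> j))"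
proof -
  have s: "s = 1 \<or> s = -1" using g by (simp add: coord_affine_def)
  have "hs_img tri_H (inv g) (half_plane j k b) =
        half_plane (inv \<rho> j) (s * k - s * d (inv \<rho> j)) (if s = 1 then b else \<not> b)" for b
    using hs_img_half_plane[OF coord_affine_inv[OF g], of j k b] by simp
  then show ?thesis using s by (auto simp: wall_img_def tri_wall_def)
qed

definition int_isom :: "('n \<Rightarrow> 'n) \<Rightarrow> int \<Rightarrow> ('n \<Rightarrow> int) \<Rightarrow> ('n \<Rightarrow> int) \<Rightarrow> 'n \<Rightarrow> int" where
  "int_isom \<rho> s d z j = s * z (inv \<rho> j) + d (inv \<rho> j) - (if s = 1 then 0 else 1)"

lemma sec_act_sec_of:
  assumes g: "coord_affine g \<rho> s d"
  shows "sec_act tri_H g (sec_of z) = sec_of (int_isom \<rho> s d z)"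
proof (rule tri_section_eqI)
  fix j k
  have \<rho>: "bij \<rho>" and s: "s = 1 \<or> s = -1" using g by (auto simp: coord_affine_def)
  define i where "i = inv \<rho> j"
  define k' where "k' = s * k - s * d i"
  have "\<rho> i = j" unfolding i_def using \<rho> by (simp add: bij_def surj_f_inv_f)
  moreover have "s * k' + d i = k" unfolding k'_def using s by auto
  ultimately have "sec_act tri_H g (sec_of z) (tri_wall j k) = half_plane j k (if s = 1 then k' \<le> z i else \<not> k' \<le> z i)"
    by (simp add: sec_act_def wall_img_inv_tri_wall[OF g] hs_img_half_plane[OF g] flip: i_def k'_def)
  also have "(if s = 1 then k' \<le> z i else \<not> k' \<le> z i) = (k \<le> int_isom \<rho> s d z j)"
    unfolding int_isom_def i_def[symmetric] k'_def using s by auto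
  finally show "sec_act tri_H g (sec_of z) (tri_wall j k) = sec_of (int_isom \<rho> s d z) (tri_wall j k)"
    by simp
qed (simp_all add: sec_act_def sec_of_outside)

text \<open>For \<open>s = -1\<close> the condition \<open>k \<le> z\<close> becomes \<open>k > z\<close>, i.e. \<open>-k \<le> -z - 1\<close>; hence the
  extra shift.\<close>

definition cube_isom :: "('n::finite \<Rightarrow> 'n) \<Rightarrow> int \<Rightarrow> ('n \<Rightarrow> int) \<Rightarrow> real^'n \<Rightarrow> real^'n" where
  "cube_isom \<rho> s d x = (\<chi> j. of_int s * x $ inv \<rho> j + of_int (d (inv \<rho> j)) - (if s = 1 then 0 else 1))"

lemma cube_isom_of_int_vec: "cube_isom \<rho> s d (of_int_vec z) = of_int_vec (int_isom \<rho> s d z)"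
  by (simp add: cube_isom_def int_isom_def vec_eq_iff)

lemma cube_isom_apply:
  "bij \<rho> \<Longrightarrow> cube_isom \<rho> s d x $ \<rho> i = of_int s * x $ i + of_int (d i) - (if s = 1 then 0 else 1)"
  by (simp add: cube_isom_def bij_is_inj)

lemma dist_cube_isom:
  assumes \<rho>: "bij \<rho>" and s: "s = 1 \<or> s = -1"
  shows "dist (cube_isom \<rho> s d x) (cube_isom \<rho> s d y) = dist x y"
proof -
  have "\<bar>of_int s :: real\<bar> = 1" using s by auto
  have "cube_isom \<rho> s d x - cube_isom \<rho> s d y = (\<chi> j. of_int s * (x - y) $ inv \<rho> j)"
    by (simp add: cube_isom_def vec_eq_iff algebra_simps)
  then have "dist (cube_isom \<rho> s d x) (cube_isom \<rho> s d y)
      = sqrt (\<Sum>j\<in>UNIV. (norm (of_int s * (x - y) $ inv \<rho> j))\<^sup>2)"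
    by (simp add: dist_norm norm_vec_def L2_set_def)
  also have "(\<Sum>j\<in>UNIV. (norm (of_int s * (x - y) $ inv \<rho> j))\<^sup>2) = (\<Sum>j\<in>UNIV. (norm ((x - y) $ inv \<rho> j))\<^sup>2)"
    by (simp add: abs_mult \<open>\<bar>of_int s\<bar> = 1\<close>)
  also have "\<dots> = (\<Sum>i\<in>UNIV. (norm ((x - y) $ i))\<^sup>2)"
    using bij_imp_bij_inv[OF \<rho>] by (intro sum.reindex_bij_betw) (simp add: bij_betw_def bij_def)
  finally show ?thesis by (simp add: dist_norm norm_vec_def L2_set_def)
qed

lemma surj_cube_isom:
  fixes \<rho> :: "'n::finite \<Rightarrow> 'n"
  assumes \<rho>: "bij \<rho>" and s: "s = 1 \<or> s = -1"
  shows "surj (cube_isom \<rho> s d)"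
proof (rule surjI)
  fix y
  let ?x = "\<chi> i. of_int s * (y $ \<rho> i - of_int (d i) + (if s = 1 then 0 else 1)) :: real^'n"
  have apply_eq: "cube_isom \<rho> s d ?x $ \<rho> i = y $ \<rho> i" for i
    using s by (auto simp: cube_isom_apply[OF \<rho>])
  show "cube_isom \<rho> s d ?x = y"
    unfolding vec_eq_iff
  proof
    fix j
    show "cube_isom \<rho> s d ?x $ j = y $ j"
      using apply_eq[of "inv \<rho> j"] \<rho> by (simp add: bij_def surj_f_inv_f)
  qed
qed

lemma sum_cube_isom:
  fixes \<rho> :: "'n::finite \<Rightarrow> 'n"
  assumes \<rho>: "bij \<rho>"
  shows "(\<Sum>j\<in>UNIV. cube_isom \<rho> s d x $ j) =
         of_int s * (\<Sum>i\<in>UNIV. x $ i) + of_int (\<Sum>i\<in>UNIV. d i) - of_nat CARD('n) * (if s = 1 then 0 else 1)"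
proof -
  have "(\<Sum>j\<in>UNIV. cube_isom \<rho> s d x $ j) = (\<Sum>i\<in>UNIV. cube_isom \<rho> s d x $ \<rho> i)"
    using \<rho> by (intro sum.reindex_bij_betw[symmetric]) (simp add: bij_betw_def bij_def)
  then show ?thesis
    by (simp add: cube_isom_apply[OF \<rho>] sum.distrib sum_subtractf sum_distrib_left)
qed

definition coord_data :: "(real \<times> real \<Rightarrow> real \<times> real) \<Rightarrow> (3 \<Rightarrow> 3) \<times> int \<times> (3 \<Rightarrow> int)" where
  "coord_data g = (SOME (\<rho>, s, d). coord_affine g \<rho> s d)"

lemma coord_data_eq: "coord_affine g \<rho> s d \<Longrightarrow> coord_data g = (\<rho>, s, d)"
  unfolding coord_data_def by (rule some_equality) (auto dest: coord_affine_unique)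

definition cube_act :: "(real \<times> real \<Rightarrow> real \<times> real) \<Rightarrow> real^3 \<Rightarrow> real^3" where
  "cube_act g = (case coord_data g of (\<rho>, s, d) \<Rightarrow> cube_isom \<rho> s d)"

lemma cube_act_eq: "coord_affine g \<rho> s d \<Longrightarrow> cube_act g = cube_isom \<rho> s d"
  by (simp add: cube_act_def coord_data_eq)

lemma tri_G_cube_actE:
  assumes "g \<in> tri_G"
  obtains \<rho> s d where "coord_affine g \<rho> s d" "cube_act g = cube_isom \<rho> s d"
  using tri_G_coord_affine[OF assms] cube_act_eq by blast

lemma sec_act_cc_vertices:
  assumes "g \<in> tri_G" "\<sigma> \<in> cc_vertices tri_H p"
  shows "sec_act tri_H g \<sigma> \<in> cc_vertices tri_H p"
    and "cube_act g (vertex_coords \<sigma>) = vertex_coords (sec_act tri_H g \<sigma>)"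
proof -
  obtain \<rho> s d where g: "coord_affine g \<rho> s d" "cube_act g = cube_isom \<rho> s d"
    using assms(1) by (rule tri_G_cube_actE)
  obtain z where "\<sigma> = sec_of z" using assms(2) by (auto simp: cc_vertices_tri_H)
  then show "sec_act tri_H g \<sigma> \<in> cc_vertices tri_H p"
    and "cube_act g (vertex_coords \<sigma>) = vertex_coords (sec_act tri_H g \<sigma>)"
    by (simp_all add: sec_act_sec_of[OF g(1)] g(2) cc_vertices_tri_H cube_isom_of_int_vec)
qed

lemma dist_cube_act:
  assumes "g \<in> tri_G"
  shows "dist (cube_act g x) (cube_act g y) = dist x y"
proof -
  obtain \<rho> s d where "coord_affine g \<rho> s d" "cube_act g = cube_isom \<rho> s d"
    using assms by (rule tri_G_cube_actE)
  then show ?thesis by (simp add: coord_affine_def dist_cube_isom)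
qed


section \<open>Properness and cocompactness\<close>

lemma compact_component_bound:
  fixes K :: "(real^'n) set"
  assumes "compact K"
  obtains R where "\<And>x i. x \<in> K \<Longrightarrow> \<bar>x $ i\<bar> \<le> R"
proof -
  obtain R where "\<forall>x\<in>K. norm x \<le> R"
    using compact_imp_bounded[OF assms] unfolding bounded_iff by blast
  then show thesis using that component_le_norm_cart order_trans by blast
qed

lemma finite_tri_G_bounded_shift:
  "finite {g \<in> tri_G. \<exists>\<rho> s d. coord_affine g \<rho> s d \<and> (\<forall>i. \<bar>d i\<bar> \<le> B)}"
    (is "finite ?G")
proof -
  have "inj_on coord_data ?G"
  proof (rule inj_onI)
    fix g g' assume "g \<in> ?G" "g' \<in> ?G" and eq: "coord_data g = coord_data g'"
    then obtain \<rho> s d \<rho>' s' d' where "coord_affine g \<rho> s d" "coord_affine g' \<rho>' s' d'" by blast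
    moreover from this eq have "(\<rho>, s, d) = (\<rho>', s', d')" by (simp add: coord_data_eq)
    ultimately show "g = g'" by (simp add: coord_affine_determines)
  qed
  moreover have "coord_data g \<in> UNIV \<times> {1, -1} \<times> (\<Pi>\<^sub>E i\<in>UNIV. {-B..B})" if "g \<in> ?G" for g
  proof -
    from that obtain \<rho> s d where g: "coord_affine g \<rho> s d" and d: "\<forall>i. \<bar>d i\<bar> \<le> B" by blast
    have "d i \<in> {-B..B}" for i using d[rule_format, of i] by (auto simp: abs_le_iff)
    with g show ?thesis by (auto simp: coord_data_eq coord_affine_def PiE_UNIV_domain)
  qed
  then have "coord_data ` ?G \<subseteq> UNIV \<times> {1, -1} \<times> (\<Pi>\<^sub>E i\<in>UNIV. {-B..B})" by blast
  then have "finite (coord_data ` ?G)"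
    by (rule finite_subset) (intro finite_cartesian_product finite_PiE; simp)
  ultimately show ?thesis using finite_imageD by blast
qed

lemma proper_cube_act:
  assumes "compact K"
  shows "finite {g \<in> tri_G. cube_act g ` K \<inter> K \<noteq> {}}"
proof -
  obtain R where R: "\<And>x i. x \<in> K \<Longrightarrow> \<bar>x $ i\<bar> \<le> R"
    using compact_component_bound[OF assms] by blast
  have "{g \<in> tri_G. cube_act g ` K \<inter> K \<noteq> {}} \<subseteq>
        {g \<in> tri_G. \<exists>\<rho> s d. coord_affine g \<rho> s d \<and> (\<forall>i. \<bar>d i\<bar> \<le> \<lceil>2 * R + 1\<rceil>)}"
  proof safe
    fix g x assume g: "g \<in> tri_G" and x: "x \<in> K" "cube_act g x \<in> K"
    obtain \<rho> s d where "coord_affine g \<rho> s d" and A: "cube_act g = cube_isom \<rho> s d"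
      using g by (rule tri_G_cube_actE)
    then have \<rho>: "bij \<rho>" and s: "s = 1 \<or> s = -1" by (auto simp: coord_affine_def)
    have "\<bar>d i\<bar> \<le> \<lceil>2 * R + 1\<rceil>" for i
    proof -
      have "cube_act g x $ \<rho> i = of_int s * x $ i + of_int (d i) - (if s = 1 then 0 else 1)"
        by (simp add: A cube_isom_apply[OF \<rho>])
      moreover have "\<bar>cube_act g x $ \<rho> i\<bar> \<le> R" "\<bar>x $ i\<bar> \<le> R" using R x by blast+
      ultimately have "of_int \<bar>d i\<bar> \<le> 2 * R + 1" using s by (auto simp: abs_if split: if_splits)
      then show ?thesis by linarith
    qed
    with \<open>coord_affine g \<rho> s d\<close> show "\<exists>\<rho> s d. coord_affine g \<rho> s d \<and> (\<forall>i. \<bar>d i\<bar> \<le> \<lceil>2 * R + 1\<rceil>)"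
      by blast
  qed
  then show ?thesis by (rule finite_subset) (rule finite_tri_G_bounded_shift)
qed

lemma inner_ones_3: "(x :: real^3) \<bullet> vector [1, 1, 1] = x $ 1 + x $ 2 + x $ 3"
  by (simp add: inner_vec_def sum_3)

text \<open>\<open>-3/2\<close> is the fixed point of \<open>t \<mapsto> -t - 3\<close>, the effect of an orientation-reversing element
  on the coordinate sum.\<close>

lemma cube_isom_level:
  fixes \<rho> :: "3 \<Rightarrow> 3"
  assumes "bij \<rho>" "s = 1 \<or> s = -1" "d 1 + d 2 + d 3 = 0"
  shows "cube_isom \<rho> s d x \<bullet> vector [1, 1, 1] + 3 / 2 = of_int s * (x \<bullet> vector [1, 1, 1] + 3 / 2)"
  using sum_cube_isom[OF assms(1), of s d x] assms(2,3) by (auto simp: inner_ones_3 sum_3)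

lemma cube_act_plane:
  assumes "g \<in> tri_G"
  shows "cube_act g ` plane111 (-3/2) = plane111 (-3/2)"
proof -
  obtain \<rho> s d where g: "coord_affine g \<rho> s d" and A: "cube_act g = cube_isom \<rho> s d"
    using assms by (rule tri_G_cube_actE)
  then have \<rho>: "bij \<rho>" and s: "s = 1 \<or> s = -1" by (auto simp: coord_affine_def)
  have plane: "cube_act g x \<in> plane111 (-3/2) \<longleftrightarrow> x \<in> plane111 (-3/2)" for x
    using cube_isom_level[OF \<rho> s coord_affine_shift_sum[OF g], of x] s
    by (auto simp: A plane111_def)
  show ?thesis
  proof (intro equalityI subsetI)
    fix y assume "y \<in> plane111 (-3/2)"
    obtain x where "y = cube_act g x" using A surj_cube_isom[OF \<rho> s] by (metis surjD)
    with plane \<open>y \<in> plane111 (-3/2)\<close> show "y \<in> cube_act g ` plane111 (-3/2)" by blast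
  qed (use plane in blast)
qed

lemma not_cocompact_cube_act: "\<not> (\<exists>K. compact K \<and> (\<Union>g\<in>tri_G. cube_act g ` K) = UNIV)"
proof
  assume "\<exists>K. compact K \<and> (\<Union>g\<in>tri_G. cube_act g ` K) = UNIV"
  then obtain K where K: "compact K" "(\<Union>g\<in>tri_G. cube_act g ` K) = UNIV" by blast
  obtain R where R: "\<And>x i. x \<in> K \<Longrightarrow> \<bar>x $ i\<bar> \<le> R"
    using compact_component_bound[OF K(1)] by blast
  define y :: "real^3" where "y = (\<chi> _. \<bar>R\<bar> + 1)"
  obtain g x where "g \<in> tri_G" "x \<in> K" "y = cube_act g x" using K(2) by blast
  moreover obtain \<rho> s d where g: "coord_affine g \<rho> s d" "cube_act g = cube_isom \<rho> s d"
    using \<open>g \<in> tri_G\<close> by (rule tri_G_cube_actE)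
  ultimately have "\<bar>y \<bullet> vector [1, 1, 1] + 3 / 2\<bar> = \<bar>x \<bullet> vector [1, 1, 1] + 3 / 2\<bar>"
    using cube_isom_level[of \<rho> s d x] coord_affine_shift_sum[OF g(1)] g(1)
    by (auto simp: coord_affine_def abs_mult)
  moreover have "\<bar>x $ 1\<bar> \<le> R" "\<bar>x $ 2\<bar> \<le> R" "\<bar>x $ 3\<bar> \<le> R" using R \<open>x \<in> K\<close> by blast+
  ultimately show False by (simp add: y_def inner_ones_3 abs_le_iff) arith
qed

lemma tri_G_comp: "g \<in> tri_G \<Longrightarrow> h \<in> tri_G \<Longrightarrow> g \<circ> h \<in> tri_G"
proof (induction rule: tri_G.induct)
  case (tri_G_step g r)
  then have "r \<circ> (g \<circ> h) \<in> tri_G" by (blast intro: tri_G.tri_G_step)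
  then show ?case by (simp only: comp_assoc)
qed simp

definition tri_translations :: "(3 \<Rightarrow> int) set" where
  "tri_translations = {t. \<exists>g\<in>tri_G. coord_affine g id 1 t}"

lemma cube_act_translation: "coord_affine g id 1 t \<Longrightarrow> cube_act g x = x + of_int_vec t"
  by (simp add: cube_act_eq cube_isom_def vec_eq_iff)

lemma tri_translationsI: "g \<in> tri_G \<Longrightarrow> coord_affine g id 1 t \<Longrightarrow> t \<in> tri_translations"
  by (auto simp: tri_translations_def)

lemma tri_translations_add:
  assumes "a \<in> tri_translations" "b \<in> tri_translations"
  shows "(\<lambda>i. a i + b i) \<in> tri_translations"
proof -
  obtain g h where "g \<in> tri_G" "coord_affine g id 1 a" "h \<in> tri_G" "coord_affine h id 1 b"
    using assms by (auto simp: tri_translations_def)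
  then have "g \<circ> h \<in> tri_G" "coord_affine (g \<circ> h) id 1 (\<lambda>i. a i + b i)"
    using tri_G_comp coord_affine_comp[of h id 1 b g id 1 a] by (auto simp: add.commute)
  then show ?thesis by (rule tri_translationsI)
qed

lemma tri_translations_int_mult:
  assumes "a \<in> tri_translations" "(\<lambda>i. - a i) \<in> tri_translations"
  shows "(\<lambda>i. m * a i) \<in> tri_translations"
proof (induction m rule: int_induct[where k = 0])
  case base
  show ?case using tri_G.tri_G_id coord_affine_id by (auto intro: tri_translationsI)
next
  case (step1 m)
  from tri_translations_add[OF step1.IH assms(1)] show ?case by (simp add: algebra_simps)
next
  case (step2 m)
  from tri_translations_add[OF step2.IH assms(2)] show ?case by (simp add: algebra_simps)
qed

lemma coord_affine_cong:
  "coord_affine g \<rho> s d \<Longrightarrow> \<forall>i. \<rho> i = \<rho>' i \<Longrightarrow> s = s' \<Longrightarrow> \<forall>i. d i = d' i \<Longrightarrow> coord_affine g \<rho>' s' d'"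
  by (metis ext)

text \<open>Each word is a product of the reflections in two parallel lines, e.g. \<open>c (a b a)\<close>.\<close>

lemma tri_translations_basis:
  "(\<lambda>i. if i = 2 then -2 else 1) \<in> tri_translations"
  "(\<lambda>i. - (if i = 2 then -2 else 1)) \<in> tri_translations"
  "(\<lambda>i. if i = 1 then 2 else -1) \<in> tri_translations"
  "(\<lambda>i. - (if i = 1 then 2 else -1)) \<in> tri_translations"
proof -
  let ?a = "refl_line 0 0" and ?b = "refl_line 2 0" and ?c = "refl_line 1 1"
  have gens: "?a \<in> tri_gens" "?b \<in> tri_gens" "?c \<in> tri_gens" by (simp_all add: tri_gens_def)
  note a = coord_affine_refl_a and b = coord_affine_refl_b and c = coord_affine_refl_c
  note simps = forall_3 Transposition.transpose_def
  have "?c \<circ> (?a \<circ> (?b \<circ> (?a \<circ> id))) \<in> tri_G"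
    "coord_affine (?c \<circ> (?a \<circ> (?b \<circ> (?a \<circ> id)))) id 1 (\<lambda>i. if i = 2 then -2 else 1)"
    by (intro tri_G.intros gens)
      (rule coord_affine_cong[OF coord_affine_comp[OF coord_affine_comp[OF coord_affine_comp[OF
        coord_affine_comp[OF coord_affine_id a] b] a] c]]; simp add: simps)
  then show "(\<lambda>i. if i = 2 then -2 else 1) \<in> tri_translations"
    by (rule tri_translationsI)
  have "?a \<circ> (?b \<circ> (?a \<circ> (?c \<circ> id))) \<in> tri_G"
    "coord_affine (?a \<circ> (?b \<circ> (?a \<circ> (?c \<circ> id)))) id 1 (\<lambda>i. - (if i = 2 then -2 else 1))"
    by (intro tri_G.intros gens)
      (rule coord_affine_cong[OF coord_affine_comp[OF coord_affine_comp[OF coord_affine_comp[OF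
        coord_affine_comp[OF coord_affine_id c] a] b] a]]; simp add: simps)
  then show "(\<lambda>i. - (if i = 2 then -2 else 1)) \<in> tri_translations"
    by (rule tri_translationsI)
  have "?b \<circ> (?c \<circ> (?b \<circ> (?a \<circ> id))) \<in> tri_G"
    "coord_affine (?b \<circ> (?c \<circ> (?b \<circ> (?a \<circ> id)))) id 1 (\<lambda>i. if i = 1 then 2 else -1)"
    by (intro tri_G.intros gens)
      (rule coord_affine_cong[OF coord_affine_comp[OF coord_affine_comp[OF coord_affine_comp[OF
        coord_affine_comp[OF coord_affine_id a] b] c] b]]; simp add: simps)
  then show "(\<lambda>i. if i = 1 then 2 else -1) \<in> tri_translations"
    by (rule tri_translationsI)
  have "?a \<circ> (?b \<circ> (?c \<circ> (?b \<circ> id))) \<in> tri_G"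
    "coord_affine (?a \<circ> (?b \<circ> (?c \<circ> (?b \<circ> id)))) id 1 (\<lambda>i. - (if i = 1 then 2 else -1))"
    by (intro tri_G.intros gens)
      (rule coord_affine_cong[OF coord_affine_comp[OF coord_affine_comp[OF coord_affine_comp[OF
        coord_affine_comp[OF coord_affine_id b] c] b] a]]; simp add: simps)
  then show "(\<lambda>i. - (if i = 1 then 2 else -1)) \<in> tri_translations"
    by (rule tri_translationsI)
qed

lemma lattice_point_near:
  fixes y :: "real^3"
  obtains m n :: int where
    "\<And>j. \<bar>y $ j - of_int (m * (if j = 2 then -2 else 1) + n * (if j = 1 then 2 else -1))\<bar>
           \<le> \<bar>y $ 1 + y $ 2 + y $ 3\<bar> + 5"
proof -
  define n where "n = \<lfloor>(y $ 1 - y $ 3) / 3\<rfloor>"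
  define m where "m = \<lfloor>y $ 3 + of_int n\<rfloor>"
  have "of_int n \<le> (y $ 1 - y $ 3) / 3" "(y $ 1 - y $ 3) / 3 < of_int n + 1"
    "of_int m \<le> y $ 3 + of_int n" "y $ 3 + of_int n < of_int m + 1"
    unfolding n_def m_def by linarith+
  then have "\<bar>y $ j - of_int (m * (if j = 2 then -2 else 1) + n * (if j = 1 then 2 else -1))\<bar>
           \<le> \<bar>y $ 1 + y $ 2 + y $ 3\<bar> + 5" for j
    using exhaust_3[of j] by (auto simp: abs_le_iff)
  then show thesis by (rule that)
qed

lemma cocompact_plane:
  "\<exists>K. compact K \<and> K \<subseteq> plane111 (-3/2) \<and> (\<Union>g\<in>tri_G. cube_act g ` K) = plane111 (-3/2)"
proof (intro exI conjI)
  let ?K = "plane111 (-3/2) \<inter> cbox (\<chi> _. -7) (\<chi> _. 7)"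
  have "closed (plane111 (-3/2))"
    using closed_hyperplane[of "vector [1, 1, 1]" "-3/2 :: real"]
    by (simp add: plane111_def inner_commute)
  then show "compact ?K" by (rule closed_Int_compact) (rule compact_cbox)
  show "?K \<subseteq> plane111 (-3/2)" by blast
  show "(\<Union>g\<in>tri_G. cube_act g ` ?K) = plane111 (-3/2)"
  proof (intro equalityI subsetI)
    fix y assume y: "y \<in> plane111 (-3/2)"
    obtain m n :: int where mn:
      "\<And>j. \<bar>y $ j - of_int (m * (if j = 2 then -2 else 1) + n * (if j = 1 then 2 else -1))\<bar>
           \<le> \<bar>y $ 1 + y $ 2 + y $ 3\<bar> + 5"
      using lattice_point_near[of y] by blast
    define t where "t j = m * (if j = 2 then -2 else 1) + n * (if j = 1 then 2 else -1)" for j :: 3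
    have "t \<in> tri_translations"
      unfolding t_def
      by (intro tri_translations_add tri_translations_int_mult tri_translations_basis)
    then obtain g where g: "g \<in> tri_G" "coord_affine g id 1 t"
      by (auto simp: tri_translations_def)
    define k where "k = y - of_int_vec t"
    have "cube_act g k = y" by (simp add: cube_act_translation[OF g(2)] k_def)
    moreover have "k \<in> ?K"
    proof -
      have "-7 \<le> k $ j \<and> k $ j \<le> 7" for j
        using mn[of j] y by (simp add: k_def t_def plane111_def inner_ones_3 abs_le_iff)
      moreover have "k $ 1 + k $ 2 + k $ 3 = -3/2"
        using y by (simp add: k_def t_def plane111_def inner_ones_3 algebra_simps)
      ultimately show ?thesis
        by (simp add: plane111_def inner_ones_3 mem_box_cart)
    qed
    ultimately show "y \<in> (\<Union>g\<in>tri_G. cube_act g ` ?K)" using g(1) by blast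
  qed (use cube_act_plane in blast)
qed

theorem mainTheorem10:
  fixes p :: "real \<times> real"
  shows "\<exists>(\<phi> :: ((real \<times> real) set set \<Rightarrow> (real \<times> real) set) \<Rightarrow> real^3)
           (A :: (real \<times> real \<Rightarrow> real \<times> real) \<Rightarrow> real^3 \<Rightarrow> real^3).
     bij_betw \<phi> (cc_vertices tri_H p) Z3 \<and>
     (\<forall>S. S \<subseteq> cc_vertices tri_H p \<longrightarrow> (S \<in> cc_cubes tri_H p \<longleftrightarrow> \<phi> ` S \<in> std_cubes)) \<and>
     (\<forall>g\<in>tri_G.
        (\<forall>\<sigma>\<in>cc_vertices tri_H p. sec_act tri_H g \<sigma> \<in> cc_vertices tri_H p) \<and>
        (\<forall>x y. dist (A g x) (A g y) = dist x y) \<and>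
        (\<forall>\<sigma>\<in>cc_vertices tri_H p. A g (\<phi> \<sigma>) = \<phi> (sec_act tri_H g \<sigma>))) \<and>
     (\<forall>K. compact K \<longrightarrow> finite {g\<in>tri_G. A g ` K \<inter> K \<noteq> {}}) \<and>
     (\<exists>c. (\<forall>g\<in>tri_G. A g ` plane111 c = plane111 c) \<and>
          (\<exists>K. compact K \<and> K \<subseteq> plane111 c \<and> (\<Union>g\<in>tri_G. A g ` K) = plane111 c)) \<and>
     \<not> (\<exists>K. compact K \<and> (\<Union>g\<in>tri_G. A g ` K) = UNIV)"
proof (intro exI[of _ vertex_coords] exI[of _ cube_act] conjI ballI allI impI)
  show "bij_betw vertex_coords (cc_vertices tri_H p) Z3"
    by (rule bij_betw_vertex_coords)
  show "S \<in> cc_cubes tri_H p \<longleftrightarrow> vertex_coords ` S \<in> std_cubes"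
    if "S \<subseteq> cc_vertices tri_H p" for S
    using that by (rule cc_cubes_iff_std_cubes)
  show "sec_act tri_H g \<sigma> \<in> cc_vertices tri_H p"
    and "cube_act g (vertex_coords \<sigma>) = vertex_coords (sec_act tri_H g \<sigma>)"
    if "g \<in> tri_G" "\<sigma> \<in> cc_vertices tri_H p" for g \<sigma>
    using that by (rule sec_act_cc_vertices)+
  show "dist (cube_act g x) (cube_act g y) = dist x y" if "g \<in> tri_G" for g x y
    using that by (rule dist_cube_act)
  show "finite {g \<in> tri_G. cube_act g ` K \<inter> K \<noteq> {}}" if "compact K" for K
    using that by (rule proper_cube_act)
  show "\<exists>c. (\<forall>g\<in>tri_G. cube_act g ` plane111 c = plane111 c) \<and>
        (\<exists>K. compact K \<and> K \<subseteq> plane111 c \<and> (\<Union>g\<in>tri_G. cube_act g ` K) = plane111 c)"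
    using cube_act_plane cocompact_plane by blast
  show "\<not> (\<exists>K. compact K \<and> (\<Union>g\<in>tri_G. cube_act g ` K) = UNIV)"
    by (rule not_cocompact_cube_act)
qed

end
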